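(* Let $(G_n)_{n\in\mathbb N}$ be a sequence of groups. If $g\in\circledast_nG_n$ has finite order, then $g$ is conjugate in $\circledast_nG_n$ to an element of some factor $G_i$.
   Context: For a sequence of groups $(G_n)_{n\in\mathbb N}$, an infinite word is a map $w:L\to\bigsqcup_n (G_n\setminus\{1\})$ from a countable linearly ordered set $L$ such that $w^{-1}(G_n)$ is finite for every $n$. Two infinite words are equivalent if for every $m$ their restrictions to the letters from $G_1,\dots,G_m$ represent the same element of $G_1*\cdots*G_m$. The topologist's product $\circledast_n G_n$ is the group of equivalence classes, with multiplication induced by concatenation and inversion by reversing the order and inverting each letter; each $G_i$ is a subgroup (one-letter words). *)

theory Defs
  imports Complex_Main "HOL-Algebra.Group"
begin

text \<open>Letters are pairs (n, x) with x a non-identity element of G n (disjoint union).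
  An infinite word is represented by a set of positions D, a subset of the rationals
  (every countable linear order embeds into the rationals), together with a labelling
  function w.\<close>

type_synonym 'a letter = "nat \<times> 'a"
type_synonym 'a iword = "rat set \<times> (rat \<Rightarrow> 'a letter)"

definition is_letter :: "(nat \<Rightarrow> 'a monoid) \<Rightarrow> 'a letter \<Rightarrow> bool" where
  "is_letter G l \<longleftrightarrow> snd l \<in> carrier (G (fst l)) \<and> snd l \<noteq> \<one>\<^bsub>G (fst l)\<^esub>"

definition is_iword :: "(nat \<Rightarrow> 'a monoid) \<Rightarrow> 'a iword \<Rightarrow> bool" where
  "is_iword G W \<longleftrightarrow> (\<forall>q\<in>fst W. is_letter G (snd W q))
      \<and> (\<forall>n. finite {q \<in> fst W. fst (snd W q) = n})"

definition proj :: "nat \<Rightarrow> 'a iword \<Rightarrow> 'a letter list" where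
  "proj m W = map (snd W) (sorted_list_of_set {q \<in> fst W. fst (snd W q) \<le> m})"

definition fp_step :: "(nat \<Rightarrow> 'a monoid) \<Rightarrow> 'a letter list \<Rightarrow> 'a letter list \<Rightarrow> bool" where
  "fp_step G xs ys \<longleftrightarrow> (\<exists>u v n x y. xs = u @ [(n, x), (n, y)] @ v \<and>
      (if x \<otimes>\<^bsub>G n\<^esub> y = \<one>\<^bsub>G n\<^esub> then ys = u @ v
       else ys = u @ [(n, x \<otimes>\<^bsub>G n\<^esub> y)] @ v))"

definition fp_eq :: "(nat \<Rightarrow> 'a monoid) \<Rightarrow> 'a letter list \<Rightarrow> 'a letter list \<Rightarrow> bool" where
  "fp_eq G = (\<lambda>xs ys. fp_step G xs ys \<or> fp_step G ys xs)\<^sup>*\<^sup>*"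

definition word_equiv :: "(nat \<Rightarrow> 'a monoid) \<Rightarrow> ('a iword \<times> 'a iword) set" where
  "word_equiv G = {(W, V). is_iword G W \<and> is_iword G V \<and> (\<forall>m. fp_eq G (proj m W) (proj m V))}"

text \<open>Order embedding of the rationals into the open interval (-1,1).\<close>
definition squash :: "rat \<Rightarrow> rat" where
  "squash q = q / (1 + \<bar>q\<bar>)"

definition concat_word :: "'a iword \<Rightarrow> 'a iword \<Rightarrow> 'a iword" where
  "concat_word W V =
     ((\<lambda>q. squash q - 1) ` fst W \<union> (\<lambda>q. squash q + 1) ` fst V,
      \<lambda>r. if r < 0 then snd W (the_inv squash (r + 1)) else snd V (the_inv squash (r - 1)))"

definition empty_word :: "'a iword" where
  "empty_word = ({}, \<lambda>_. undefined)"

definition topprod :: "(nat \<Rightarrow> 'a monoid) \<Rightarrow> 'a iword set monoid" where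
  "topprod G = \<lparr> carrier = {word_equiv G `` {W} | W. is_iword G W},
     mult = (\<lambda>A B. word_equiv G `` {concat_word (SOME W. W \<in> A) (SOME V. V \<in> B)}),
     one = word_equiv G `` {empty_word} \<rparr>"

definition factor_incl :: "(nat \<Rightarrow> 'a monoid) \<Rightarrow> nat \<Rightarrow> 'a \<Rightarrow> 'a iword set" where
  "factor_incl G i a = (if a = \<one>\<^bsub>G i\<^esub> then \<one>\<^bsub>topprod G\<^esub>
      else word_equiv G `` {({0}, \<lambda>_. (i, a))})"

end

theory Submission
  imports Defs
begin

text \<open>Represent g by an infinite word W; its projection w to G 0 * ... * G m has finite order.
  Pushing the letters of w one at a time onto a list of syllables computes the normal form of w
  (van der Waerden's argument), and the normal form of an element of finite order is u c u\<inverse>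
  with c a single syllable. Some prefix of w has normal form u followed by one syllable from the
  factor of c, and this prefix conjugates w into that factor; it is the subword of W on a set of
  positions below level m. These sets are compatible under restriction to lower levels, so Koenig's lemma
  gives one set of positions I that works at every level. With P the subword of W on I, every
  projection of P\<inverse> W P reduces to at most one letter, and the letters at different levels
  agree, so P\<inverse> W P represents an element of a single factor.\<close>

section \<open>Reduction of finite words\<close>

lemma fp_eq_refl [simp]: "fp_eq G xs xs"
  by (simp add: fp_eq_def)

lemma fp_eq_sym: "fp_eq G xs ys \<Longrightarrow> fp_eq G ys xs"
  unfolding fp_eq_def by (rule symp_rtranclp[THEN sympD]) (auto simp: symp_def)

lemma fp_eq_trans [trans]: "fp_eq G xs ys \<Longrightarrow> fp_eq G ys zs \<Longrightarrow> fp_eq G xs zs"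
  unfolding fp_eq_def by (rule rtranclp_trans)

lemma fp_eq_iff_left: "fp_eq G xs ys \<Longrightarrow> fp_eq G xs zs \<longleftrightarrow> fp_eq G ys zs"
  by (meson fp_eq_sym fp_eq_trans)

lemma fp_step_imp_fp_eq: "fp_step G xs ys \<Longrightarrow> fp_eq G xs ys"
  unfolding fp_eq_def by auto

lemma fp_step_in_context: "fp_step G xs ys \<Longrightarrow> fp_step G (a @ xs @ b) (a @ ys @ b)"
  unfolding fp_step_def
proof (elim exE conjE)
  fix u v n x y
  assume "xs = u @ [(n, x), (n, y)] @ v"
    and "if x \<otimes>\<^bsub>G n\<^esub> y = \<one>\<^bsub>G n\<^esub> then ys = u @ v else ys = u @ [(n, x \<otimes>\<^bsub>G n\<^esub> y)] @ v"
  then show "\<exists>u v n x y. a @ xs @ b = u @ [(n, x), (n, y)] @ v \<and>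
      (if x \<otimes>\<^bsub>G n\<^esub> y = \<one>\<^bsub>G n\<^esub> then a @ ys @ b = u @ v
       else a @ ys @ b = u @ [(n, x \<otimes>\<^bsub>G n\<^esub> y)] @ v)"
    by (intro exI[of _ "a @ u"] exI[of _ "v @ b"] exI[of _ n] exI[of _ x] exI[of _ y])
      (auto split: if_splits)
qed

lemma fp_eq_in_context: "fp_eq G xs ys \<Longrightarrow> fp_eq G (a @ xs @ b) (a @ ys @ b)"
  unfolding fp_eq_def
proof (induction rule: rtranclp_induct)
  case (step y z)
  then show ?case
    using fp_step_in_context by (metis (mono_tags, lifting) rtranclp.rtrancl_into_rtrancl)
qed simp

lemma fp_eq_append: "fp_eq G xs ys \<Longrightarrow> fp_eq G xs' ys' \<Longrightarrow> fp_eq G (xs @ xs') (ys @ ys')"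
  using fp_eq_in_context[of G xs ys "[]" xs'] fp_eq_in_context[of G xs' ys' ys "[]"]
  by (auto intro: fp_eq_trans)

lemma fp_eq_append_left: "fp_eq G xs ys \<Longrightarrow> fp_eq G (a @ xs) (a @ ys)"
  using fp_eq_append[of G a a xs ys] by simp

lemma fp_eq_append_right: "fp_eq G xs ys \<Longrightarrow> fp_eq G (xs @ b) (ys @ b)"
  using fp_eq_append[of G xs ys b b] by simp

lemma fp_eq_cancel_pair: "x \<otimes>\<^bsub>G n\<^esub> y = \<one>\<^bsub>G n\<^esub> \<Longrightarrow> fp_eq G [(n, x), (n, y)] []"
  by (rule fp_step_imp_fp_eq) (force simp: fp_step_def)

lemma fp_eq_merge_pair:
  "x \<otimes>\<^bsub>G n\<^esub> y \<noteq> \<one>\<^bsub>G n\<^esub> \<Longrightarrow> fp_eq G [(n, x), (n, y)] [(n, x \<otimes>\<^bsub>G n\<^esub> y)]"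
  by (rule fp_step_imp_fp_eq) (force simp: fp_step_def)

lemma fp_step_filter_index:
  assumes "fp_step G xs ys"
  shows "filter (\<lambda>l. P (fst l)) xs = filter (\<lambda>l. P (fst l)) ys
    \<or> fp_step G (filter (\<lambda>l. P (fst l)) xs) (filter (\<lambda>l. P (fst l)) ys)"
proof -
  from assms obtain u v n x y where xs: "xs = u @ [(n, x), (n, y)] @ v" and
    ys: "ys = (if x \<otimes>\<^bsub>G n\<^esub> y = \<one>\<^bsub>G n\<^esub> then u @ v else u @ [(n, x \<otimes>\<^bsub>G n\<^esub> y)] @ v)"
    unfolding fp_step_def by (auto split: if_splits)
  let ?f = "filter (\<lambda>l. P (fst l))"
  show ?thesis
  proof (cases "P n")
    case True
    have "fp_step G (?f xs) (?f ys)"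
      unfolding fp_step_def
      by (intro exI[of _ "?f u"] exI[of _ "?f v"] exI[of _ n] exI[of _ x] exI[of _ y])
        (use True xs ys in auto)
    then show ?thesis ..
  qed (use xs ys in auto)
qed

lemma fp_eq_filter_index:
  "fp_eq G xs ys \<Longrightarrow> fp_eq G (filter (\<lambda>l. P (fst l)) xs) (filter (\<lambda>l. P (fst l)) ys)"
  unfolding fp_eq_def
proof (induction rule: rtranclp_induct)
  case (step y z)
  then show ?case
    using fp_step_filter_index[of G y z P] fp_step_filter_index[of G z y P]
    by (auto intro: rtranclp.rtrancl_into_rtrancl)
qed simp

definition word_pow :: "nat \<Rightarrow> 'b list \<Rightarrow> 'b list" where
  "word_pow k w = concat (replicate k w)"

lemma word_pow_0 [simp]: "word_pow 0 w = []"
  by (simp add: word_pow_def)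

lemma word_pow_Suc: "word_pow (Suc k) w = w @ word_pow k w"
  by (simp add: word_pow_def)

lemma word_pow_Suc': "word_pow (Suc k) w = word_pow k w @ w"
  by (simp add: word_pow_def replicate_append_same[symmetric] del: replicate_append_same)

lemma fp_eq_word_pow: "fp_eq G xs ys \<Longrightarrow> fp_eq G (word_pow k xs) (word_pow k ys)"
  by (induction k) (auto simp: word_pow_Suc intro: fp_eq_append)

lemma fp_eq_word_pow_conj:
  assumes "fp_eq G (v @ u) []" "k > 0"
  shows "fp_eq G (word_pow k (u @ x @ v)) (u @ word_pow k x @ v)"
  using assms(2)
proof (induction k)
  case (Suc k)
  show ?case
  proof (cases "k = 0")
    case False
    then have "fp_eq G (word_pow (Suc k) (u @ x @ v)) ((u @ x) @ (v @ u) @ (word_pow k x @ v))"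
      using Suc fp_eq_append_left[of G _ _ "u @ x @ v"] by (simp add: word_pow_Suc)
    also have "fp_eq G \<dots> ((u @ x) @ [] @ (word_pow k x @ v))"
      by (rule fp_eq_in_context[OF assms(1)])
    finally show ?thesis by (simp add: word_pow_Suc)
  qed (simp add: word_pow_def)
qed simp

section \<open>Syllable normal forms\<close>

type_synonym 'a syllables = "(nat \<times> 'a letter list) list"

fun alternating :: "(nat \<times> 'b) list \<Rightarrow> bool" where
  "alternating [] = True"
| "alternating [_] = True"
| "alternating (a # b # s) \<longleftrightarrow> fst a \<noteq> fst b \<and> alternating (b # s)"

lemma alternating_Cons: "alternating (a # s) \<longleftrightarrow> alternating s \<and> (s = [] \<or> fst a \<noteq> fst (hd s))"
  by (cases s) auto

lemma alternating_append:
  "alternating (xs @ ys) \<longleftrightarrow>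
     alternating xs \<and> alternating ys \<and> (xs = [] \<or> ys = [] \<or> fst (last xs) \<noteq> fst (hd ys))"
  by (induction xs) (auto simp: alternating_Cons)

text \<open>A list of syllables stores the last syllable of the word it represents first, so that
  appending a letter to the word only inspects the head of the list.\<close>

definition syllables_word :: "'a syllables \<Rightarrow> 'a letter list" where
  "syllables_word s = concat (rev (map snd s))"

definition reduced_syllables :: "(nat \<Rightarrow> 'a monoid) \<Rightarrow> 'a syllables \<Rightarrow> bool" where
  "reduced_syllables G s \<longleftrightarrow>
     alternating s \<and> (\<forall>(k, b) \<in> set s. (\<forall>l \<in> set b. fst l = k) \<and> \<not> fp_eq G b [])"

definition syllables_equiv :: "(nat \<Rightarrow> 'a monoid) \<Rightarrow> 'a syllables \<Rightarrow> 'a syllables \<Rightarrow> bool" where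
  "syllables_equiv G = list_all2 (\<lambda>(k, b) (k', b'). k = k' \<and> fp_eq G b b')"

definition top_syllable :: "nat \<Rightarrow> 'a syllables \<Rightarrow> 'a letter list" where
  "top_syllable n s = (case s of (k, b) # _ \<Rightarrow> if k = n then b else [] | [] \<Rightarrow> [])"

definition pop_syllable :: "nat \<Rightarrow> 'a syllables \<Rightarrow> 'a syllables" where
  "pop_syllable n s = (case s of (k, _) # s' \<Rightarrow> if k = n then s' else s | [] \<Rightarrow> [])"

definition push_syllable :: "(nat \<Rightarrow> 'a monoid) \<Rightarrow> nat \<Rightarrow> 'a letter list \<Rightarrow> 'a syllables \<Rightarrow> 'a syllables"
  where "push_syllable G n b s = (if fp_eq G b [] then s else (n, b) # s)"

definition push_letter :: "(nat \<Rightarrow> 'a monoid) \<Rightarrow> 'a letter \<Rightarrow> 'a syllables \<Rightarrow> 'a syllables" where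
  "push_letter G l s =
     push_syllable G (fst l) (top_syllable (fst l) s @ [l]) (pop_syllable (fst l) s)"

lemma syllables_word_simps [simp]:
  "syllables_word [] = []"
  "syllables_word ((k, b) # s) = syllables_word s @ b"
  "syllables_word (s @ t) = syllables_word t @ syllables_word s"
  by (auto simp: syllables_word_def)

lemma reduced_syllables_Nil [simp]: "reduced_syllables G []"
  by (simp add: reduced_syllables_def)

lemma reduced_syllables_Cons:
  "reduced_syllables G ((k, b) # s) \<longleftrightarrow> reduced_syllables G s \<and> (\<forall>l \<in> set b. fst l = k)
     \<and> \<not> fp_eq G b [] \<and> (s = [] \<or> k \<noteq> fst (hd s))"
  unfolding reduced_syllables_def alternating_Cons by auto

lemma reduced_syllables_append:
  "reduced_syllables G (xs @ ys) \<longleftrightarrow> reduced_syllables G xs \<and> reduced_syllables G ys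
     \<and> (xs = [] \<or> ys = [] \<or> fst (last xs) \<noteq> fst (hd ys))"
  unfolding reduced_syllables_def alternating_append by auto

lemma syllables_equiv_refl [simp]: "syllables_equiv G s s"
  unfolding syllables_equiv_def by (induction s) auto

lemma syllables_equiv_sym: "syllables_equiv G s t \<Longrightarrow> syllables_equiv G t s"
  unfolding syllables_equiv_def
  by (induction rule: list_all2_induct) (auto intro: fp_eq_sym)

lemma syllables_equiv_trans:
  "syllables_equiv G s t \<Longrightarrow> syllables_equiv G t u \<Longrightarrow> syllables_equiv G s u"
  unfolding syllables_equiv_def
proof (induction s t arbitrary: u rule: list_all2_induct)
  case (Cons x xs y ys)
  then show ?case by (cases u) (auto intro: fp_eq_trans)
qed simp

lemma syllables_equiv_Nil [simp]:
  "syllables_equiv G [] t \<longleftrightarrow> t = []" "syllables_equiv G t [] \<longleftrightarrow> t = []"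
  unfolding syllables_equiv_def by auto

lemma syllables_equiv_Cons:
  "syllables_equiv G ((k, b) # s) t \<longleftrightarrow>
     (\<exists>b' t'. t = (k, b') # t' \<and> fp_eq G b b' \<and> syllables_equiv G s t')"
  unfolding syllables_equiv_def by (cases t) auto

lemma syllables_word_pop_top:
  "syllables_word s = syllables_word (pop_syllable n s) @ top_syllable n s"
  by (cases s) (auto simp: top_syllable_def pop_syllable_def)

lemma reduced_syllables_pop_syllable:
  "reduced_syllables G s \<Longrightarrow> reduced_syllables G (pop_syllable n s)"
  by (cases s) (auto simp: pop_syllable_def reduced_syllables_Cons)

lemma reduced_syllables_pop_syllable_hd:
  "reduced_syllables G s \<Longrightarrow> pop_syllable n s = [] \<or> fst (hd (pop_syllable n s)) \<noteq> n"
  by (cases s) (auto simp: pop_syllable_def reduced_syllables_Cons split: if_splits)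

lemma reduced_syllables_top_syllable:
  "reduced_syllables G s \<Longrightarrow> \<forall>l \<in> set (top_syllable n s). fst l = n"
  by (cases s) (fastforce simp: top_syllable_def reduced_syllables_Cons)+

lemma reduced_syllables_push_pop:
  "reduced_syllables G s \<Longrightarrow> push_syllable G n (top_syllable n s) (pop_syllable n s) = s"
  by (cases s)
    (auto simp: top_syllable_def pop_syllable_def push_syllable_def reduced_syllables_Cons
      split: if_splits)

lemma top_syllable_push_syllable:
  "s = [] \<or> fst (hd s) \<noteq> n \<Longrightarrow>
     top_syllable n (push_syllable G n b s) = (if fp_eq G b [] then [] else b)"
  by (cases s) (auto simp: top_syllable_def push_syllable_def)

lemma pop_syllable_push_syllable:
  "s = [] \<or> fst (hd s) \<noteq> n \<Longrightarrow> pop_syllable n (push_syllable G n b s) = s"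
  by (cases s) (auto simp: pop_syllable_def push_syllable_def)

lemma top_syllable_equiv:
  "syllables_equiv G s t \<Longrightarrow> fp_eq G (top_syllable n s) (top_syllable n t)"
  by (cases s) (auto simp: syllables_equiv_Cons top_syllable_def)

lemma pop_syllable_equiv:
  "syllables_equiv G s t \<Longrightarrow> syllables_equiv G (pop_syllable n s) (pop_syllable n t)"
  by (cases s) (auto simp: syllables_equiv_Cons pop_syllable_def)

lemma push_syllable_equiv:
  assumes "fp_eq G b b'" "syllables_equiv G s s'"
  shows "syllables_equiv G (push_syllable G n b s) (push_syllable G n b' s')"
  using assms fp_eq_iff_left[OF assms(1), of "[]"]
  by (auto simp: push_syllable_def syllables_equiv_def)

lemma push_letter_equiv:
  "syllables_equiv G s t \<Longrightarrow> syllables_equiv G (push_letter G l s) (push_letter G l t)"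
  unfolding push_letter_def
  by (intro push_syllable_equiv fp_eq_append_right top_syllable_equiv pop_syllable_equiv)

lemma fold_push_letter_equiv:
  "syllables_equiv G s t \<Longrightarrow>
     syllables_equiv G (fold (push_letter G) xs s) (fold (push_letter G) xs t)"
  by (induction xs arbitrary: s t) (auto intro: push_letter_equiv)

lemma reduced_push_syllable:
  assumes "reduced_syllables G s" "s = [] \<or> fst (hd s) \<noteq> n" "\<forall>l \<in> set b. fst l = n"
  shows "reduced_syllables G (push_syllable G n b s)"
  using assms by (auto simp: push_syllable_def reduced_syllables_Cons)

lemma reduced_push_letter: "reduced_syllables G s \<Longrightarrow> reduced_syllables G (push_letter G l s)"
  unfolding push_letter_def
  by (intro reduced_push_syllable reduced_syllables_pop_syllable reduced_syllables_pop_syllable_hd)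
    (auto dest: reduced_syllables_top_syllable)

lemma reduced_fold_push_letter:
  "reduced_syllables G s \<Longrightarrow> reduced_syllables G (fold (push_letter G) xs s)"
  by (induction xs arbitrary: s) (auto intro: reduced_push_letter)

lemma fp_eq_syllables_word_push_syllable:
  "fp_eq G (syllables_word s @ b) (syllables_word (push_syllable G n b s))"
  using fp_eq_append_left[of G b "[]" "syllables_word s"] by (simp add: push_syllable_def)

lemma fp_eq_syllables_word_push_letter:
  "fp_eq G (syllables_word s @ [l]) (syllables_word (push_letter G l s))"
  using fp_eq_syllables_word_push_syllable[of G "pop_syllable (fst l) s"]
  by (simp add: push_letter_def syllables_word_pop_top[of s "fst l"])

lemma fp_eq_syllables_word_fold:
  "fp_eq G (syllables_word s @ xs) (syllables_word (fold (push_letter G) xs s))"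
proof (induction xs arbitrary: s)
  case (Cons l xs)
  have "fp_eq G (syllables_word s @ [l] @ xs) (syllables_word (push_letter G l s) @ xs)"
    using fp_eq_append_right[OF fp_eq_syllables_word_push_letter] by simp
  then show ?case using Cons.IH by (auto intro: fp_eq_trans)
qed simp

lemma push_letter_push_syllable:
  assumes "s = [] \<or> fst (hd s) \<noteq> n"
  shows "syllables_equiv G (push_letter G (n, y) (push_syllable G n b s))
           (push_syllable G n (b @ [(n, y)]) s)"
proof -
  have "fp_eq G ((if fp_eq G b [] then [] else b) @ [(n, y)]) (b @ [(n, y)])"
    using fp_eq_append_right[of G b "[]" "[(n, y)]"] by (auto intro: fp_eq_sym)
  then show ?thesis
    unfolding push_letter_def
    by (simp add: top_syllable_push_syllable[OF assms] pop_syllable_push_syllable[OF assms]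
        push_syllable_equiv)
qed

text \<open>The syllable action respects the defining relations of the free product; this is
  van der Waerden's argument for the normal form.\<close>

lemma push_letter_pair:
  assumes "reduced_syllables G s"
  shows "syllables_equiv G (push_letter G (n, y) (push_letter G (n, x) s))
           (if x \<otimes>\<^bsub>G n\<^esub> y = \<one>\<^bsub>G n\<^esub> then s else push_letter G (n, x \<otimes>\<^bsub>G n\<^esub> y) s)"
proof -
  let ?t = "top_syllable n s" and ?r = "pop_syllable n s"
  have r: "?r = [] \<or> fst (hd ?r) \<noteq> n"
    using reduced_syllables_pop_syllable_hd[OF assms] .
  have pushed: "syllables_equiv G (push_letter G (n, y) (push_letter G (n, x) s))
      (push_syllable G n (?t @ [(n, x), (n, y)]) ?r)"
    using push_letter_push_syllable[OF r, of G y "?t @ [(n, x)]"] by (simp add: push_letter_def)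
  show ?thesis
  proof (cases "x \<otimes>\<^bsub>G n\<^esub> y = \<one>\<^bsub>G n\<^esub>")
    case True
    then have "syllables_equiv G (push_syllable G n (?t @ [(n, x), (n, y)]) ?r) (push_syllable G n ?t ?r)"
      using fp_eq_append_left[OF fp_eq_cancel_pair, of G n x y ?t] by (simp add: push_syllable_equiv)
    then show ?thesis
      using True pushed reduced_syllables_push_pop[OF assms] by (auto intro: syllables_equiv_trans)
  next
    case False
    then have "syllables_equiv G (push_syllable G n (?t @ [(n, x), (n, y)]) ?r)
        (push_letter G (n, x \<otimes>\<^bsub>G n\<^esub> y) s)"
      using fp_eq_append_left[OF fp_eq_merge_pair, of G n x y ?t]
      by (simp add: push_syllable_equiv push_letter_def)
    then show ?thesis
      using False pushed by (auto intro: syllables_equiv_trans)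
  qed
qed

lemma fp_step_fold_push_letter:
  assumes "fp_step G xs ys" "reduced_syllables G s"
  shows "syllables_equiv G (fold (push_letter G) xs s) (fold (push_letter G) ys s)"
proof -
  from assms(1) obtain u v n x y where xs: "xs = u @ [(n, x), (n, y)] @ v" and
    ys: "ys = (if x \<otimes>\<^bsub>G n\<^esub> y = \<one>\<^bsub>G n\<^esub> then u @ v else u @ [(n, x \<otimes>\<^bsub>G n\<^esub> y)] @ v)"
    unfolding fp_step_def by (auto split: if_splits)
  have "reduced_syllables G (fold (push_letter G) u s)"
    using assms(2) by (rule reduced_fold_push_letter)
  from push_letter_pair[OF this, of n y x] show ?thesis
    using xs ys fold_push_letter_equiv by (auto split: if_splits)
qed

lemma fp_eq_fold_push_letter:
  assumes "fp_eq G xs ys" "reduced_syllables G s"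
  shows "syllables_equiv G (fold (push_letter G) xs s) (fold (push_letter G) ys s)"
  using assms(1) unfolding fp_eq_def
proof (induction rule: rtranclp_induct)
  case (step y z)
  then show ?case
    using fp_step_fold_push_letter[OF _ assms(2)] syllables_equiv_trans syllables_equiv_sym
    by blast
qed simp

lemma fold_push_letter_syllable:
  assumes "\<forall>l \<in> set b. fst l = n" "s = [] \<or> fst (hd s) \<noteq> n"
  shows "syllables_equiv G (fold (push_letter G) b s) (push_syllable G n b s)"
  using assms(1)
proof (induction b rule: rev_induct)
  case Nil
  then show ?case by (simp add: push_syllable_def)
next
  case (snoc l b)
  then obtain x where "l = (n, x)" by (cases l) auto
  then show ?case
    using push_letter_equiv[OF snoc.IH, of l] push_letter_push_syllable[OF assms(2), of G x b] snoc.prems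
    by (auto intro: syllables_equiv_trans)
qed

lemma fold_push_syllables_word:
  assumes "reduced_syllables G T" "T = [] \<or> s = [] \<or> fst (last T) \<noteq> fst (hd s)"
  shows "syllables_equiv G (fold (push_letter G) (syllables_word T) s) (T @ s)"
  using assms
proof (induction T arbitrary: s rule: rev_induct)
  case (snoc a T)
  obtain n b where a: "a = (n, b)" by (cases a)
  have T: "reduced_syllables G T" and b: "\<forall>l \<in> set b. fst l = n" "\<not> fp_eq G b []"
    and "T = [] \<or> fst (last T) \<noteq> n"
    using snoc.prems(1) a by (auto simp: reduced_syllables_append reduced_syllables_Cons)
  then have "syllables_equiv G (fold (push_letter G) (syllables_word T) ((n, b) # s)) (T @ (n, b) # s)"
    using snoc.IH by auto
  moreover have "syllables_equiv G (fold (push_letter G) b s) ((n, b) # s)"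
    using fold_push_letter_syllable[OF b(1), of s G] snoc.prems(2) a b(2)
    by (auto simp: push_syllable_def)
  ultimately show ?case
    using a fold_push_letter_equiv syllables_equiv_trans by fastforce
qed simp

lemma pop_syllable_suffix: "\<exists>p. s = p @ pop_syllable n s"
proof (cases s)
  case (Cons a s')
  then show ?thesis
    by (cases a) (auto simp: pop_syllable_def intro: exI[of _ "[]"] exI[of _ "[a]"])
qed (simp add: pop_syllable_def)

lemma push_letter_suffix:
  assumes "push_letter G l t = pre @ (i, c) # B" and "\<nexists>pre' c'. t = pre' @ (i, c') # B"
  shows "\<exists>c'. push_letter G l t = (i, c') # B"
proof -
  let ?r = "pop_syllable (fst l) t"
  obtain p where "t = p @ ?r"
    using pop_syllable_suffix by blast
  then have "\<nexists>pre' c'. ?r = pre' @ (i, c') # B"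
    using assms(2) by (metis append.assoc)
  then show ?thesis
    using assms(1) by (auto simp: push_letter_def push_syllable_def Cons_eq_append_conv split: if_splits)
qed

text \<open>The powers of a cyclically reduced word are already in normal form.\<close>

lemma cyclically_reduced_word_pow_nontrivial:
  assumes T: "reduced_syllables G T" "T \<noteq> []" "fst (hd T) \<noteq> fst (last T)" and "k > 0"
  shows "\<not> fp_eq G (word_pow k (syllables_word T)) []"
proof
  assume trivial: "fp_eq G (word_pow k (syllables_word T)) []"
  have pow: "syllables_equiv G (fold (push_letter G) (word_pow j (syllables_word T)) [])
      (concat (replicate j T))" for j
  proof (induction j)
    case (Suc j)
    have "syllables_equiv G (fold (push_letter G) (syllables_word T) (concat (replicate j T)))
        (T @ concat (replicate j T))"
    proof (rule fold_push_syllables_word[OF T(1)])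
      show "T = [] \<or> concat (replicate j T) = [] \<or> fst (last T) \<noteq> fst (hd (concat (replicate j T)))"
        using T by (cases j) (auto simp: hd_append)
    qed
    then show ?case
      using fold_push_letter_equiv[OF Suc.IH] by (auto simp: word_pow_Suc' intro: syllables_equiv_trans)
  qed (simp add: word_pow_def)
  have "syllables_equiv G (fold (push_letter G) (word_pow k (syllables_word T)) []) []"
    using fp_eq_fold_push_letter[OF trivial, of "[]"] by simp
  with pow[of k] have "syllables_equiv G (concat (replicate k T)) []"
    by (auto intro: syllables_equiv_trans syllables_equiv_sym)
  then show False
    using T(2) \<open>k > 0\<close> by (cases k) auto
qed

section \<open>Inverse words and elements of finite order\<close>

definition letter_inv :: "(nat \<Rightarrow> 'a monoid) \<Rightarrow> 'a letter \<Rightarrow> 'a letter" where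
  "letter_inv G l = (fst l, inv\<^bsub>G (fst l)\<^esub> (snd l))"

definition word_inv :: "(nat \<Rightarrow> 'a monoid) \<Rightarrow> 'a letter list \<Rightarrow> 'a letter list" where
  "word_inv G w = rev (map (letter_inv G) w)"

lemma word_inv_simps [simp]:
  "word_inv G [] = []"
  "word_inv G (a @ b) = word_inv G b @ word_inv G a"
  "word_inv G (l # w) = word_inv G w @ [letter_inv G l]"
  by (auto simp: word_inv_def)

lemma word_inv_filter_index:
  "word_inv G (filter (\<lambda>l. P (fst l)) xs) = filter (\<lambda>l. P (fst l)) (word_inv G xs)"
  by (induction xs) (auto simp: letter_inv_def)

definition valid_word :: "(nat \<Rightarrow> 'a monoid) \<Rightarrow> 'a letter list \<Rightarrow> bool" where
  "valid_word G w \<longleftrightarrow> (\<forall>l \<in> set w. is_letter G l)"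

lemma valid_word_simps [simp]:
  "valid_word G []"
  "valid_word G (a @ b) \<longleftrightarrow> valid_word G a \<and> valid_word G b"
  "valid_word G (l # w) \<longleftrightarrow> is_letter G l \<and> valid_word G w"
  by (auto simp: valid_word_def)

definition valid_syllables :: "(nat \<Rightarrow> 'a monoid) \<Rightarrow> 'a syllables \<Rightarrow> bool" where
  "valid_syllables G s \<longleftrightarrow> (\<forall>(k, b) \<in> set s. valid_word G b)"

lemma valid_syllables_simps [simp]:
  "valid_syllables G []"
  "valid_syllables G (xs @ ys) \<longleftrightarrow> valid_syllables G xs \<and> valid_syllables G ys"
  "valid_syllables G ((k, b) # s) \<longleftrightarrow> valid_word G b \<and> valid_syllables G s"
  by (auto simp: valid_syllables_def)

lemma valid_syllables_push_letter:
  "valid_syllables G s \<Longrightarrow> is_letter G l \<Longrightarrow> valid_syllables G (push_letter G l s)"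
  by (cases s)
    (auto simp: push_letter_def push_syllable_def top_syllable_def pop_syllable_def
      valid_syllables_def)

lemma valid_syllables_fold_push_letter:
  "valid_syllables G s \<Longrightarrow> valid_word G xs \<Longrightarrow> valid_syllables G (fold (push_letter G) xs s)"
  by (induction xs arbitrary: s) (auto intro: valid_syllables_push_letter)

lemma valid_word_syllables_word: "valid_syllables G s \<Longrightarrow> valid_word G (syllables_word s)"
  by (induction s) auto

definition reduces_to_short :: "(nat \<Rightarrow> 'a monoid) \<Rightarrow> 'a letter list \<Rightarrow> bool" where
  "reduces_to_short G xs \<longleftrightarrow>
     fp_eq G xs [] \<or> (\<exists>i. \<exists>a \<in> carrier (G i). a \<noteq> \<one>\<^bsub>G i\<^esub> \<and> fp_eq G xs [(i, a)])"

lemma reduces_to_short_fp_eq: "fp_eq G xs ys \<Longrightarrow> reduces_to_short G ys \<Longrightarrow> reduces_to_short G xs"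
  unfolding reduces_to_short_def by (meson fp_eq_trans)

context
  fixes G :: "nat \<Rightarrow> 'a monoid"
  assumes grp: "\<And>n. group (G n)"
begin

lemma is_letter_letter_inv: "is_letter G l \<Longrightarrow> is_letter G (letter_inv G l)"
  using group.inv_closed[OF grp] group.inv_eq_1_iff[OF grp]
  by (auto simp: is_letter_def letter_inv_def)

lemma valid_word_inv: "valid_word G w \<Longrightarrow> valid_word G (word_inv G w)"
  by (auto simp: valid_word_def word_inv_def is_letter_letter_inv)

lemma word_inv_word_inv: "valid_word G w \<Longrightarrow> word_inv G (word_inv G w) = w"
  by (induction w) (auto simp: letter_inv_def is_letter_def group.inv_inv[OF grp])

lemma fp_eq_word_inv_right: "valid_word G w \<Longrightarrow> fp_eq G (w @ word_inv G w) []"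
proof (induction w)
  case (Cons l w)
  then have "fp_eq G ([l] @ (w @ word_inv G w) @ [letter_inv G l]) ([l] @ [] @ [letter_inv G l])"
    by (intro fp_eq_in_context) auto
  moreover have "fp_eq G [l, letter_inv G l] []"
    using Cons.prems
    by (cases l) (auto simp: letter_inv_def is_letter_def group.r_inv[OF grp] intro: fp_eq_cancel_pair)
  ultimately show ?case by (simp, meson fp_eq_trans)
qed simp

lemma fp_eq_word_inv_left: "valid_word G w \<Longrightarrow> fp_eq G (word_inv G w @ w) []"
  using fp_eq_word_inv_right[OF valid_word_inv] word_inv_word_inv by metis

lemma fp_eq_cancel_middle: "valid_word G u \<Longrightarrow> fp_eq G (a @ u @ word_inv G u @ b) (a @ b)"
  using fp_eq_in_context[OF fp_eq_word_inv_right, of u a b] by simp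

lemma fp_eq_cancel_middle': "valid_word G u \<Longrightarrow> fp_eq G (a @ word_inv G u @ u @ b) (a @ b)"
  using fp_eq_in_context[OF fp_eq_word_inv_left, of u a b] by simp

lemma fp_eq_word_inv:
  assumes "valid_word G p" "valid_word G q" "fp_eq G p q"
  shows "fp_eq G (word_inv G p) (word_inv G q)"
proof -
  have "fp_eq G (word_inv G p) (word_inv G p @ q @ word_inv G q)"
    using fp_eq_cancel_middle[OF assms(2), of "word_inv G p" "[]"] by (simp add: fp_eq_sym)
  also have "fp_eq G \<dots> (word_inv G p @ p @ word_inv G q)"
    using fp_eq_in_context[OF fp_eq_sym[OF assms(3)]] .
  also have "fp_eq G \<dots> (word_inv G q)"
    using fp_eq_cancel_middle'[OF assms(1), of "[]"] by simp
  finally show ?thesis .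
qed

lemma fp_eq_conj_Nil_iff:
  assumes "valid_word G u"
  shows "fp_eq G (word_inv G u @ x @ u) [] \<longleftrightarrow> fp_eq G x []"
proof
  assume conj: "fp_eq G (word_inv G u @ x @ u) []"
  have "fp_eq G x (x @ u @ word_inv G u)"
    using fp_eq_cancel_middle[OF assms, of x "[]"] by (simp add: fp_eq_sym)
  also have "fp_eq G \<dots> (u @ word_inv G u @ x @ u @ word_inv G u)"
    using fp_eq_cancel_middle[OF assms, of "[]" "x @ u @ word_inv G u"] by (simp add: fp_eq_sym)
  also have "fp_eq G \<dots> (u @ [] @ word_inv G u)"
    using fp_eq_in_context[OF conj, of u "word_inv G u"] by simp
  also have "fp_eq G \<dots> []"
    using fp_eq_word_inv_right[OF assms] by simp
  finally show "fp_eq G x []" .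
next
  assume "fp_eq G x []"
  then have "fp_eq G (word_inv G u @ x @ u) (word_inv G u @ [] @ u)"
    by (rule fp_eq_in_context)
  also have "fp_eq G \<dots> []"
    using fp_eq_word_inv_left[OF assms] by simp
  finally show "fp_eq G (word_inv G u @ x @ u) []" .
qed

lemma fp_eq_word_inv_if_append_Nil:
  assumes "valid_word G b" "fp_eq G (a @ b) []"
  shows "fp_eq G a (word_inv G b)"
proof -
  have "fp_eq G a (a @ b @ word_inv G b)"
    using fp_eq_cancel_middle[OF assms(1), of a "[]"] by (simp add: fp_eq_sym)
  also have "fp_eq G \<dots> ([] @ word_inv G b)"
    using fp_eq_append_right[OF assms(2), of "word_inv G b"] by simp
  finally show ?thesis by simp
qed

lemma fp_eq_conj_by_prefix:
  assumes "valid_word G p" "valid_word G u" "valid_word G c"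
    and "fp_eq G p (u @ c)" "fp_eq G w (u @ x @ word_inv G u)"
  shows "fp_eq G (word_inv G p @ w @ p) (word_inv G c @ x @ c)"
proof -
  have "fp_eq G (word_inv G p) (word_inv G c @ word_inv G u)"
    using fp_eq_word_inv[OF assms(1) _ assms(4)] assms(2,3) by simp
  then have "fp_eq G (word_inv G p @ w @ p)
      ((word_inv G c @ word_inv G u) @ (u @ x @ word_inv G u) @ (u @ c))"
    using assms(4,5) by (intro fp_eq_append)
  also have "fp_eq G \<dots> (word_inv G c @ x @ word_inv G u @ u @ c)"
    using fp_eq_cancel_middle'[OF assms(2), of "word_inv G c" "x @ word_inv G u @ u @ c"] by simp
  also have "fp_eq G \<dots> (word_inv G c @ x @ c)"
    using fp_eq_cancel_middle'[OF assms(2), of "word_inv G c @ x" c] by simp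
  finally show ?thesis .
qed

lemma reduces_to_short_single_index:
  assumes "valid_word G xs" "\<forall>l \<in> set xs. fst l = i"
  shows "reduces_to_short G xs"
proof -
  have "fp_eq G xs [] \<or> (\<exists>a \<in> carrier (G i). a \<noteq> \<one>\<^bsub>G i\<^esub> \<and> fp_eq G xs [(i, a)])"
    using assms
  proof (induction xs rule: rev_induct)
    case (snoc l xs)
    obtain y where l: "l = (i, y)" and y: "y \<in> carrier (G i)" "y \<noteq> \<one>\<^bsub>G i\<^esub>"
      using snoc.prems by (cases l) (auto simp: is_letter_def)
    from snoc have "fp_eq G xs [] \<or> (\<exists>a \<in> carrier (G i). a \<noteq> \<one>\<^bsub>G i\<^esub> \<and> fp_eq G xs [(i, a)])"
      by auto
    then show ?case
    proof (elim disjE bexE conjE)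
      assume "fp_eq G xs []"
      then show ?thesis using fp_eq_append_right[of G xs "[]" "[l]"] l y by auto
    next
      fix a assume a: "a \<in> carrier (G i)" "fp_eq G xs [(i, a)]"
      then have xs: "fp_eq G (xs @ [l]) [(i, a), (i, y)]"
        using fp_eq_append_right[OF a(2), of "[l]"] l by simp
      have "a \<otimes>\<^bsub>G i\<^esub> y \<in> carrier (G i)"
        using a(1) y(1) monoid.m_closed[OF group.is_monoid[OF grp]] by blast
      then show ?thesis
        using fp_eq_trans[OF xs fp_eq_cancel_pair[of G i a y]]
          fp_eq_trans[OF xs fp_eq_merge_pair[of G i a y]] by blast
    qed
  qed simp
  then show ?thesis unfolding reduces_to_short_def by blast
qed

end

text \<open>The word of such a list of syllables has the form u c u\<inverse> with u the word of B.\<close>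

definition conjugate_syllables :: "(nat \<Rightarrow> 'a monoid) \<Rightarrow> 'a syllables \<Rightarrow> bool" where
  "conjugate_syllables G T \<longleftrightarrow> T = [] \<or> (\<exists>Tt i c B. T = Tt @ [(i, c)] @ B
     \<and> fp_eq G (syllables_word Tt) (word_inv G (syllables_word B)))"

lemma fold_push_letter_reaches_suffix:
  assumes "fold (push_letter G) w [] = pre @ (i, c) # B"
  shows "\<exists>j \<le> length w. \<exists>c'. fold (push_letter G) (take j w) [] = (i, c') # B"
  using assms
proof (induction w arbitrary: pre c rule: rev_induct)
  case (snoc l w)
  show ?case
  proof (cases "\<exists>pre' c'. fold (push_letter G) w [] = pre' @ (i, c') # B")
    case True
    then obtain j c' where "j \<le> length w" "fold (push_letter G) (take j w) [] = (i, c') # B"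
      using snoc.IH by blast
    then show ?thesis
      by (intro exI[of _ j]) auto
  next
    case False
    then obtain c' where "push_letter G l (fold (push_letter G) w []) = (i, c') # B"
      using push_letter_suffix[of G l "fold (push_letter G) w []"] snoc.prems by auto
    then show ?thesis
      by (intro exI[of _ "length (w @ [l])"]) auto
  qed
qed simp

context
  fixes G :: "nat \<Rightarrow> 'a monoid"
  assumes grp: "\<And>n. group (G n)"
begin

lemma torsion_of_conjugate:
  assumes "valid_word G b" "fp_eq G (a @ b) []" "k > 0"
    and "fp_eq G (word_pow k (b @ m @ a)) []"
  shows "fp_eq G (word_pow k m) []"
proof -
  have "fp_eq G (word_pow k (b @ m @ a)) (word_pow k (b @ m @ word_inv G b))"
    using fp_eq_word_inv_if_append_Nil[OF grp assms(1,2)] by (intro fp_eq_word_pow fp_eq_append_left)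
  also have "fp_eq G \<dots> (b @ word_pow k m @ word_inv G b)"
    using fp_eq_word_pow_conj[OF fp_eq_word_inv_left[OF grp assms(1)] assms(3)] .
  finally have "fp_eq G (b @ word_pow k m @ word_inv G b) []"
    using fp_eq_iff_left assms(4) by blast
  then have "fp_eq G (word_inv G (word_inv G b) @ word_pow k m @ word_inv G b) []"
    using word_inv_word_inv[OF grp assms(1)] by simp
  then show ?thesis
    using fp_eq_conj_Nil_iff[OF grp valid_word_inv[OF grp assms(1)]] by blast
qed

text \<open>The outer syllables of the normal form of an element of finite order cancel: otherwise
  merging them gives a cyclically reduced conjugate.\<close>

lemma torsion_syllables_ends_cancel:
  assumes T: "reduced_syllables G ((n, a) # M @ [(n, b)])" "M \<noteq> []"
    and "valid_word G b" "k > 0"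
    and "fp_eq G (word_pow k (b @ syllables_word M @ a)) []"
  shows "fp_eq G (a @ b) []"
proof (rule ccontr)
  assume nontrivial: "\<not> fp_eq G (a @ b) []"
  let ?T = "(n, a @ b) # M"
  have "reduced_syllables G ?T" "fst (hd ?T) \<noteq> fst (last ?T)"
    using T nontrivial by (auto simp: reduced_syllables_Cons reduced_syllables_append)
  then have "\<not> fp_eq G (word_pow k (syllables_word ?T)) []"
    using cyclically_reduced_word_pow_nontrivial \<open>k > 0\<close> by blast
  have "fp_eq G (syllables_word ?T) (word_inv G b @ (b @ syllables_word M @ a) @ b)"
    using fp_eq_cancel_middle'[OF grp \<open>valid_word G b\<close>, of "[]" "syllables_word M @ a @ b"]
    by (simp add: fp_eq_sym)
  then have "fp_eq G (word_pow k (syllables_word ?T))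
      (word_pow k (word_inv G b @ (b @ syllables_word M @ a) @ b))"
    by (rule fp_eq_word_pow)
  also have "fp_eq G \<dots> (word_inv G b @ word_pow k (b @ syllables_word M @ a) @ b)"
    using fp_eq_word_pow_conj[OF fp_eq_word_inv_right[OF grp \<open>valid_word G b\<close>] \<open>k > 0\<close>] .
  also have "fp_eq G \<dots> (word_inv G b @ [] @ b)"
    using fp_eq_in_context[OF assms(5)] .
  also have "fp_eq G \<dots> []"
    using fp_eq_word_inv_left[OF grp \<open>valid_word G b\<close>] by simp
  finally show False
    using \<open>\<not> fp_eq G (word_pow k (syllables_word ?T)) []\<close> by blast
qed

lemma torsion_syllables_conjugate:
  assumes "reduced_syllables G T" "valid_syllables G T" "k > 0"
    and "fp_eq G (word_pow k (syllables_word T)) []"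
  shows "conjugate_syllables G T"
  using assms
proof (induction "length T" arbitrary: T rule: less_induct)
  case less
  show ?case
  proof (cases "length T \<le> 1")
    case True
    then show ?thesis
      unfolding conjugate_syllables_def by (cases T) (auto intro!: exI[of _ "[]"])
  next
    case False
    then obtain n a T' where "T = (n, a) # T'" "T' \<noteq> []" by (cases T) auto
    then obtain M n' b where T: "T = (n, a) # M @ [(n', b)]"
      by (cases T' rule: rev_cases) auto
    have "n = n'"
      using cyclically_reduced_word_pow_nontrivial less.prems T by fastforce
    then have M: "M \<noteq> []" "reduced_syllables G M" "valid_syllables G M" "valid_word G b"
      using less.prems(1,2) T by (auto simp: reduced_syllables_Cons reduced_syllables_append)
    have "fp_eq G (a @ b) []"
      using torsion_syllables_ends_cancel[of n a M b] less.prems T \<open>n = n'\<close> M by simp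
    then have "fp_eq G (word_pow k (syllables_word M)) []"
      using torsion_of_conjugate[OF M(4)] less.prems T by simp
    then have "conjugate_syllables G M"
      using less.hyps M less.prems(3) T by simp
    then obtain Mt i c0 Mb where "M = Mt @ [(i, c0)] @ Mb"
      and "fp_eq G (syllables_word Mt) (word_inv G (syllables_word Mb))"
      using M(1) unfolding conjugate_syllables_def by blast
    moreover have "fp_eq G a (word_inv G b)"
      using fp_eq_word_inv_if_append_Nil[OF grp M(4) \<open>fp_eq G (a @ b) []\<close>] .
    ultimately have "T = ((n, a) # Mt) @ [(i, c0)] @ (Mb @ [(n, b)])"
      and "fp_eq G (syllables_word ((n, a) # Mt)) (word_inv G (syllables_word (Mb @ [(n, b)])))"
      using T \<open>n = n'\<close> by (auto intro: fp_eq_append)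
    then show ?thesis unfolding conjugate_syllables_def by blast
  qed
qed

text \<open>If the normal form of w is u c0 u\<inverse> with c0 a syllable from G i, then, since the
  normal forms of the prefixes of w only change at the top, some prefix p of w has normal form
  u c with c a syllable from G i; this p conjugates w to c\<inverse> c0 c, a word in G i alone.\<close>

lemma prefix_conjugates_into_factor:
  assumes w: "valid_word G w" and T: "fold (push_letter G) w [] = Tt @ [(i, c0)] @ B"
    and conj: "fp_eq G (syllables_word Tt) (word_inv G (syllables_word B))"
  shows "\<exists>j \<le> length w. reduces_to_short G (word_inv G (take j w) @ w @ take j w)"
proof -
  obtain j c where j: "j \<le> length w" and prefix: "fold (push_letter G) (take j w) [] = (i, c) # B"
    using fold_push_letter_reaches_suffix[of G w Tt i c0 B] T by auto
  let ?p = "take j w"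
  have p: "valid_word G ?p"
    using w by (auto simp: valid_word_def dest: in_set_takeD)
  have "reduced_syllables G (fold (push_letter G) w [])"
    "valid_syllables G (fold (push_letter G) w [])"
    using w by (auto intro: reduced_fold_push_letter valid_syllables_fold_push_letter)
  then have T_valid: "reduced_syllables G (Tt @ [(i, c0)] @ B)" "valid_syllables G (Tt @ [(i, c0)] @ B)"
    unfolding T by simp_all
  have S: "reduced_syllables G ((i, c) # B)" "valid_syllables G ((i, c) # B)"
    using reduced_fold_push_letter[of G "[]"] valid_syllables_fold_push_letter[OF _ p]
    by (auto simp flip: prefix)
  have "fp_eq G ?p (syllables_word B @ c)"
    using fp_eq_syllables_word_fold[of G "[]" ?p] prefix by simp
  moreover have "fp_eq G w (syllables_word B @ c0 @ syllables_word Tt)"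
    using fp_eq_syllables_word_fold[of G "[]" w] T by simp
  then have "fp_eq G w (syllables_word B @ c0 @ word_inv G (syllables_word B))"
    using fp_eq_append_left[OF conj, of "syllables_word B @ c0"] fp_eq_trans by fastforce
  ultimately have "fp_eq G (word_inv G ?p @ w @ ?p) (word_inv G c @ c0 @ c)"
    using S T_valid by (intro fp_eq_conj_by_prefix[OF grp p]) (auto intro: valid_word_syllables_word)
  moreover have "reduces_to_short G (word_inv G c @ c0 @ c)"
  proof (rule reduces_to_short_single_index[OF grp])
    show "valid_word G (word_inv G c @ c0 @ c)"
      using S T_valid valid_word_inv[OF grp] by auto
    show "\<forall>l \<in> set (word_inv G c @ c0 @ c). fst l = i"
      using S T_valid
      by (auto simp: reduced_syllables_Cons reduced_syllables_append word_inv_def letter_inv_def)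
  qed
  ultimately show ?thesis
    using j reduces_to_short_fp_eq by blast
qed

lemma torsion_conjugate_prefix:
  assumes w: "valid_word G w" and "k > 0" and "fp_eq G (word_pow k w) []"
  shows "\<exists>j \<le> length w. reduces_to_short G (word_inv G (take j w) @ w @ take j w)"
proof -
  define T where "T = fold (push_letter G) w []"
  have wT: "fp_eq G w (syllables_word T)"
    using fp_eq_syllables_word_fold[of G "[]" w] unfolding T_def by simp
  then have "fp_eq G (word_pow k (syllables_word T)) []"
    using fp_eq_iff_left[OF fp_eq_word_pow[OF wT, of k]] assms(3) by blast
  moreover have "reduced_syllables G T" "valid_syllables G T"
    unfolding T_def using w by (auto intro: reduced_fold_push_letter valid_syllables_fold_push_letter)
  ultimately have "conjugate_syllables G T"
    using torsion_syllables_conjugate \<open>k > 0\<close> by blast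
  then show ?thesis
    unfolding conjugate_syllables_def
  proof (elim disjE exE conjE)
    assume "T = []"
    then show ?thesis
      using wT by (intro exI[of _ 0]) (simp add: reduces_to_short_def)
  next
    fix Tt i c0 B
    assume "T = Tt @ [(i, c0)] @ B" "fp_eq G (syllables_word Tt) (word_inv G (syllables_word B))"
    then show ?thesis
      using prefix_conjugates_into_factor[OF w] unfolding T_def by blast
  qed
qed

end

section \<open>Operations on infinite words\<close>

lemma sorted_list_of_set_set_strict: "sorted_wrt (<) xs \<Longrightarrow> sorted_list_of_set (set xs) = xs"
  by (simp add: sorted_list_of_set.idem_if_sorted_distinct strict_sorted_iff)

lemma sorted_list_of_set_image_strict_mono:
  assumes "finite A" "strict_mono f"
  shows "sorted_list_of_set (f ` A) = map f (sorted_list_of_set A)"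
proof -
  have "sorted_wrt (<) (map f (sorted_list_of_set A))"
    unfolding sorted_wrt_map
    by (rule sorted_wrt_mono_rel[OF _ strict_sorted_list_of_set])
      (use assms(2) in \<open>auto simp: strict_mono_def\<close>)
  then show ?thesis
    using sorted_list_of_set_set_strict assms(1) by fastforce
qed

lemma sorted_list_of_set_Un_less:
  assumes "finite A" "finite B" "\<forall>a \<in> A. \<forall>b \<in> B. a < b"
  shows "sorted_list_of_set (A \<union> B) = sorted_list_of_set A @ sorted_list_of_set B"
proof -
  have "sorted_wrt (<) (sorted_list_of_set A @ sorted_list_of_set B)"
    using assms strict_sorted_list_of_set[of A] strict_sorted_list_of_set[of B]
    by (auto simp: sorted_wrt_append)
  then show ?thesis
    using sorted_list_of_set_set_strict assms(1,2) by fastforce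
qed

lemma sorted_list_of_set_filter:
  assumes "finite A"
  shows "sorted_list_of_set {x \<in> A. P x} = filter P (sorted_list_of_set A)"
proof -
  have "sorted_wrt (<) (filter P (sorted_list_of_set A))"
    using strict_sorted_list_of_set[of A] by (simp add: sorted_wrt_filter)
  moreover have "set (filter P (sorted_list_of_set A)) = {x \<in> A. P x}"
    using assms by auto
  ultimately show ?thesis
    using sorted_list_of_set_set_strict by metis
qed

lemma sorted_list_of_set_uminus:
  assumes "finite (A :: 'b :: linordered_ab_group_add set)"
  shows "sorted_list_of_set (uminus ` A) = rev (map uminus (sorted_list_of_set A))"
proof -
  have "sorted_wrt (<) (rev (map uminus (sorted_list_of_set A)))"
    unfolding sorted_wrt_rev sorted_wrt_map
    by (rule sorted_wrt_mono_rel[OF _ strict_sorted_list_of_set]) auto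
  then show ?thesis
    using sorted_list_of_set_set_strict assms by fastforce
qed

lemma strict_mono_squash: "strict_mono squash"
proof (rule strict_monoI)
  fix a b :: rat
  assume ab: "a < b"
  have "a * (1 + \<bar>b\<bar>) < b * (1 + \<bar>a\<bar>)"
  proof (cases "0 \<le> a")
    case True
    then have "b \<ge> 0" using ab by simp
    then show ?thesis using True ab by (simp add: algebra_simps)
  next
    case False
    show ?thesis
    proof (cases "0 \<le> b")
      case True
      have "a * (1 + \<bar>b\<bar>) < 0" using False by (simp add: mult_neg_pos add_pos_nonneg)
      moreover have "b * (1 + \<bar>a\<bar>) \<ge> 0" using True by simp
      ultimately show ?thesis by linarith
    next
      case False2: False
      then show ?thesis using False ab by (simp add: algebra_simps)
    qed
  qed
  moreover have "1 + \<bar>a\<bar> > 0" "1 + \<bar>b\<bar> > 0"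
    by auto
  ultimately show "squash a < squash b"
    unfolding squash_def by (simp add: field_simps)
qed

lemma abs_squash_less_1: "\<bar>squash q\<bar> < 1"
proof -
  have "\<bar>q\<bar> < 1 + \<bar>q\<bar>" by simp
  then show ?thesis unfolding squash_def by (simp add: field_simps)
qed

lemma inj_squash: "inj squash"
  using strict_mono_squash strict_mono_imp_inj_on by blast

lemma finite_iword_levels_le: "is_iword G W \<Longrightarrow> finite {q \<in> fst W. fst (snd W q) \<le> m}"
proof -
  assume "is_iword G W"
  moreover have "{q \<in> fst W. fst (snd W q) \<le> m} = (\<Union>n \<le> m. {q \<in> fst W. fst (snd W q) = n})"
    by auto
  ultimately show ?thesis by (simp add: is_iword_def)
qed

lemma valid_word_proj: "is_iword G W \<Longrightarrow> valid_word G (proj m W)"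
  by (auto simp: valid_word_def proj_def is_iword_def finite_iword_levels_le)

lemma proj_le_filter:
  assumes "is_iword G W" "m \<le> n"
  shows "proj m W = filter (\<lambda>l. fst l \<le> m) (proj n W)"
proof -
  have "{q \<in> fst W. fst (snd W q) \<le> m} =
      {q \<in> {q \<in> fst W. fst (snd W q) \<le> n}. fst (snd W q) \<le> m}"
    using assms(2) by auto
  then have "sorted_list_of_set {q \<in> fst W. fst (snd W q) \<le> m} =
      filter (\<lambda>q. fst (snd W q) \<le> m) (sorted_list_of_set {q \<in> fst W. fst (snd W q) \<le> n})"
    by (simp only: sorted_list_of_set_filter[OF finite_iword_levels_le[OF assms(1)]])
  then show ?thesis
    unfolding proj_def by (simp add: filter_map comp_def)
qed

lemma fp_eq_proj_le:
  assumes "is_iword G C" "m \<le> n" "fp_eq G (proj n C) xs"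
  shows "fp_eq G (proj m C) (filter (\<lambda>l. fst l \<le> m) xs)"
  using fp_eq_filter_index[OF assms(3), of "\<lambda>k. k \<le> m"] proj_le_filter[OF assms(1,2)] by simp

lemma is_iword_restrict:
  assumes "is_iword G W" "I \<subseteq> fst W"
  shows "is_iword G (I, snd W)"
proof -
  have sub: "{q \<in> I. fst (snd W q) = n} \<subseteq> {q \<in> fst W. fst (snd W q) = n}" for n
    using assms(2) by auto
  have "finite {q \<in> I. fst (snd W q) = n}" for n
    using finite_subset[OF sub] assms(1) unfolding is_iword_def by blast
  then show ?thesis
    using assms unfolding is_iword_def by auto
qed

lemma proj_cong_levels:
  "{q \<in> X. fst (snd W q) \<le> m} = {q \<in> Y. fst (snd W q) \<le> m} \<Longrightarrow> proj m (X, snd W) = proj m (Y, snd W)"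
  by (simp add: proj_def)

lemma take_proj_eq_proj_restrict:
  assumes "is_iword G W"
  shows "\<exists>X \<subseteq> {q \<in> fst W. fst (snd W q) \<le> m}. proj m (X, snd W) = take j (proj m W)"
proof -
  let ?D = "{q \<in> fst W. fst (snd W q) \<le> m}"
  let ?X = "set (take j (sorted_list_of_set ?D))"
  have X: "?X \<subseteq> ?D"
    using finite_iword_levels_le[OF assms] by (auto dest: in_set_takeD)
  then have "{q \<in> ?X. fst (snd W q) \<le> m} = ?X"
    by auto
  then have "proj m (?X, snd W) = map (snd W) (take j (sorted_list_of_set ?D))"
    unfolding proj_def
    by (simp add: sorted_list_of_set_set_strict sorted_wrt_take strict_sorted_list_of_set)
  then show ?thesis
    using X by (auto simp: proj_def take_map)
qed

definition embed_left :: "rat \<Rightarrow> rat" where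
  "embed_left q = squash q - 1"

definition embed_right :: "rat \<Rightarrow> rat" where
  "embed_right q = squash q + 1"

lemma strict_mono_embed_left: "strict_mono embed_left"
  using strict_mono_squash by (auto simp: strict_mono_def embed_left_def)

lemma strict_mono_embed_right: "strict_mono embed_right"
  using strict_mono_squash by (auto simp: strict_mono_def embed_right_def)

lemma embed_left_neg: "embed_left q < 0"
  using abs_squash_less_1[of q] by (auto simp: embed_left_def)

lemma embed_right_pos: "embed_right q > 0"
  using abs_squash_less_1[of q] by (auto simp: embed_right_def)

lemma fst_concat_word: "fst (concat_word W V) = embed_left ` fst W \<union> embed_right ` fst V"
  by (simp add: concat_word_def embed_left_def embed_right_def)

lemma snd_concat_word_left: "snd (concat_word W V) (embed_left q) = snd W q"
  using embed_left_neg[of q]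
  by (simp add: concat_word_def embed_left_def the_inv_f_f[OF inj_squash])

lemma snd_concat_word_right: "snd (concat_word W V) (embed_right q) = snd V q"
  using embed_right_pos[of q]
  by (simp add: concat_word_def embed_right_def the_inv_f_f[OF inj_squash])

lemma concat_word_positions:
  "{r \<in> fst (concat_word W V). P (snd (concat_word W V) r)} =
     embed_left ` {q \<in> fst W. P (snd W q)} \<union> embed_right ` {q \<in> fst V. P (snd V q)}"
  by (auto simp: fst_concat_word snd_concat_word_left snd_concat_word_right)

lemma is_iword_concat:
  assumes "is_iword G W" "is_iword G V"
  shows "is_iword G (concat_word W V)"
proof -
  have "finite {r \<in> fst (concat_word W V). fst (snd (concat_word W V) r) = n}" for n
    using concat_word_positions[of W V "\<lambda>l. fst l = n"] assms by (simp add: is_iword_def)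
  moreover have "\<forall>q \<in> fst (concat_word W V). is_letter G (snd (concat_word W V) q)"
    using assms by (auto simp: fst_concat_word snd_concat_word_left snd_concat_word_right is_iword_def)
  ultimately show ?thesis by (simp add: is_iword_def)
qed

lemma proj_concat_word:
  assumes "is_iword G W" "is_iword G V"
  shows "proj m (concat_word W V) = proj m W @ proj m V"
proof -
  let ?A = "{q \<in> fst W. fst (snd W q) \<le> m}" and ?B = "{q \<in> fst V. fst (snd V q) \<le> m}"
  have fin: "finite ?A" "finite ?B"
    using finite_iword_levels_le assms by blast+
  have "sorted_list_of_set (embed_left ` ?A \<union> embed_right ` ?B)
      = map embed_left (sorted_list_of_set ?A) @ map embed_right (sorted_list_of_set ?B)"
    using fin embed_left_neg embed_right_pos
    by (subst sorted_list_of_set_Un_less)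
      (auto intro: less_trans simp: sorted_list_of_set_image_strict_mono
        strict_mono_embed_left strict_mono_embed_right)
  then show ?thesis
    unfolding proj_def concat_word_positions[of W V "\<lambda>l. fst l \<le> m"]
    by (simp add: comp_def snd_concat_word_left snd_concat_word_right)
qed

lemma is_iword_empty: "is_iword G empty_word"
  by (simp add: is_iword_def empty_word_def)

lemma proj_empty_word [simp]: "proj m empty_word = []"
  by (simp add: proj_def empty_word_def)

definition inverse_word :: "(nat \<Rightarrow> 'a monoid) \<Rightarrow> 'a iword \<Rightarrow> 'a iword" where
  "inverse_word G W = (uminus ` fst W, \<lambda>q. letter_inv G (snd W (- q)))"

lemma inverse_word_positions:
  "{q \<in> fst (inverse_word G W). P (fst (snd (inverse_word G W) q))} =
     uminus ` {q \<in> fst W. P (fst (snd W q))}"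
proof -
  have "x \<in> uminus ` A \<longleftrightarrow> - x \<in> A" for x :: rat and A
    by force
  then show ?thesis
    by (auto simp: inverse_word_def letter_inv_def)
qed

lemma proj_inverse_word:
  assumes "is_iword G W"
  shows "proj m (inverse_word G W) = word_inv G (proj m W)"
  unfolding proj_def inverse_word_positions[of G W "\<lambda>k. k \<le> m"]
  by (simp add: sorted_list_of_set_uminus[OF finite_iword_levels_le[OF assms]] word_inv_def
      rev_map comp_def inverse_word_def)

lemma is_iword_inverse_word:
  assumes "\<And>n. group (G n)" "is_iword G W"
  shows "is_iword G (inverse_word G W)"
  using assms(2) is_letter_letter_inv[OF assms(1)] inverse_word_positions[of G W "\<lambda>k. k = _"]
  by (auto simp: is_iword_def inverse_word_def)

definition letter_iword :: "nat \<Rightarrow> 'a \<Rightarrow> 'a iword" where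
  "letter_iword i a = ({0}, \<lambda>_. (i, a))"

lemma proj_letter_iword: "proj m (letter_iword i a) = filter (\<lambda>l. fst l \<le> m) [(i, a)]"
proof -
  have "{q \<in> {0 :: rat}. i \<le> m} = (if i \<le> m then {0} else {})" by auto
  then show ?thesis by (simp add: proj_def letter_iword_def)
qed

lemma is_iword_letter_iword: "is_letter G (i, a) \<Longrightarrow> is_iword G (letter_iword i a)"
  by (auto simp: is_iword_def letter_iword_def)

definition conj_proj :: "(nat \<Rightarrow> 'a monoid) \<Rightarrow> nat \<Rightarrow> 'a iword \<Rightarrow> 'a iword \<Rightarrow> 'a letter list" where
  "conj_proj G m P W = word_inv G (proj m P) @ proj m W @ proj m P"

lemma conj_proj_le_filter:
  assumes "is_iword G P" "is_iword G W" "m \<le> n"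
  shows "conj_proj G m P W = filter (\<lambda>l. fst l \<le> m) (conj_proj G n P W)"
  using assms
  by (simp add: conj_proj_def proj_le_filter[of G _ m n] word_inv_filter_index[of G "\<lambda>k. k \<le> m"])

section \<open>The topologist's product as a group\<close>

abbreviation word_class :: "(nat \<Rightarrow> 'a monoid) \<Rightarrow> 'a iword \<Rightarrow> 'a iword set" where
  "word_class G W \<equiv> word_equiv G `` {W}"

lemma equiv_word_equiv: "equiv {W. is_iword G W} (word_equiv G)"
proof (rule equivI)
  show "refl_on {W. is_iword G W} (word_equiv G)"
    by (auto simp: refl_on_def word_equiv_def)
  show "word_equiv G \<subseteq> {W. is_iword G W} \<times> {W. is_iword G W}"
    by (auto simp: word_equiv_def)
  show "sym (word_equiv G)"
    by (rule symI) (auto simp: word_equiv_def intro: fp_eq_sym)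
  show "trans (word_equiv G)"
    by (rule transI) (auto simp: word_equiv_def intro: fp_eq_trans)
qed

lemma word_class_eq_iff:
  assumes "is_iword G W" "is_iword G V"
  shows "word_class G W = word_class G V \<longleftrightarrow> (\<forall>m. fp_eq G (proj m W) (proj m V))"
  using equiv_class_eq_iff[OF equiv_word_equiv, of W V G] assms
  by (auto simp: word_equiv_def)

lemma carrier_topprod: "carrier (topprod G) = {word_class G W | W. is_iword G W}"
  by (simp add: topprod_def)

lemma one_topprod: "\<one>\<^bsub>topprod G\<^esub> = word_class G empty_word"
  by (simp add: topprod_def)

lemma mult_topprod_word_class:
  assumes W: "is_iword G W" and V: "is_iword G V"
  shows "word_class G W \<otimes>\<^bsub>topprod G\<^esub> word_class G V = word_class G (concat_word W V)"
proof -
  define W' where "W' = (SOME W'. W' \<in> word_class G W)"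
  define V' where "V' = (SOME V'. V' \<in> word_class G V)"
  have "W \<in> word_class G W" "V \<in> word_class G V"
    using W V by (auto simp: word_equiv_def)
  then have "W' \<in> word_class G W" "V' \<in> word_class G V"
    unfolding W'_def V'_def by (auto intro: someI)
  then have W': "is_iword G W'" "\<forall>m. fp_eq G (proj m W) (proj m W')"
    and V': "is_iword G V'" "\<forall>m. fp_eq G (proj m V) (proj m V')"
    by (auto simp: word_equiv_def)
  have "fp_eq G (proj m (concat_word W' V')) (proj m (concat_word W V))" for m
    using fp_eq_append[OF fp_eq_sym[OF spec[OF W'(2), of m]] fp_eq_sym[OF spec[OF V'(2), of m]]]
    by (simp only: proj_concat_word[OF W'(1) V'(1)] proj_concat_word[OF W V])
  then have "word_class G (concat_word W' V') = word_class G (concat_word W V)"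
    using word_class_eq_iff[OF is_iword_concat[OF W'(1) V'(1)] is_iword_concat[OF W V]] by simp
  then show ?thesis
    unfolding topprod_def W'_def V'_def by simp
qed

lemma word_class_eq_by_proj:
  assumes "is_iword G W" "is_iword G V" "\<And>m. proj m W = proj m V"
  shows "word_class G W = word_class G V"
  using assms by (simp add: word_class_eq_iff)

lemma word_class_concat_assoc:
  assumes W: "is_iword G W" and V: "is_iword G V" and U: "is_iword G U"
  shows "word_class G (concat_word (concat_word W V) U) = word_class G (concat_word W (concat_word V U))"
  using W V U
  by (intro word_class_eq_by_proj)
    (simp_all add: is_iword_concat proj_concat_word[OF is_iword_concat[OF W V] U]
      proj_concat_word[OF W is_iword_concat[OF V U]] proj_concat_word)

lemma word_class_concat_empty: "is_iword G W \<Longrightarrow> word_class G (concat_word empty_word W) = word_class G W"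
  by (intro word_class_eq_by_proj) (simp_all add: is_iword_concat is_iword_empty proj_concat_word)

context
  fixes G :: "nat \<Rightarrow> 'a monoid"
  assumes grp: "\<And>n. group (G n)"
begin

lemma inverse_word_concat_trivial:
  assumes "is_iword G W"
  shows "word_class G (concat_word (inverse_word G W) W) = word_class G empty_word"
    and "word_class G (concat_word W (inverse_word G W)) = word_class G empty_word"
proof -
  have W': "is_iword G (inverse_word G W)"
    using is_iword_inverse_word[OF grp assms] .
  show "word_class G (concat_word (inverse_word G W) W) = word_class G empty_word"
    using fp_eq_word_inv_left[OF grp valid_word_proj[OF assms]]
    by (simp add: word_class_eq_iff is_iword_concat[OF W' assms] is_iword_empty
        proj_concat_word[OF W' assms] proj_inverse_word[OF assms])
  show "word_class G (concat_word W (inverse_word G W)) = word_class G empty_word"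
    using fp_eq_word_inv_right[OF grp valid_word_proj[OF assms]]
    by (simp add: word_class_eq_iff is_iword_concat[OF assms W'] is_iword_empty
        proj_concat_word[OF assms W'] proj_inverse_word[OF assms])
qed

lemma topprod_group: "group (topprod G)"
proof (rule groupI)
  fix x y
  assume "x \<in> carrier (topprod G)" "y \<in> carrier (topprod G)"
  then obtain W V where "is_iword G W" "x = word_class G W" "is_iword G V" "y = word_class G V"
    by (auto simp: carrier_topprod)
  then have "x \<otimes>\<^bsub>topprod G\<^esub> y = word_class G (concat_word W V)"
    "is_iword G (concat_word W V)"
    by (simp_all add: mult_topprod_word_class is_iword_concat)
  then show "x \<otimes>\<^bsub>topprod G\<^esub> y \<in> carrier (topprod G)"
    unfolding carrier_topprod by blast
next
  show "\<one>\<^bsub>topprod G\<^esub> \<in> carrier (topprod G)"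
    using is_iword_empty unfolding carrier_topprod one_topprod by blast
next
  fix x y z
  assume "x \<in> carrier (topprod G)" "y \<in> carrier (topprod G)" "z \<in> carrier (topprod G)"
  then obtain W V U where W: "is_iword G W" "x = word_class G W"
    and V: "is_iword G V" "y = word_class G V" and U: "is_iword G U" "z = word_class G U"
    by (auto simp: carrier_topprod)
  then show "x \<otimes>\<^bsub>topprod G\<^esub> y \<otimes>\<^bsub>topprod G\<^esub> z = x \<otimes>\<^bsub>topprod G\<^esub> (y \<otimes>\<^bsub>topprod G\<^esub> z)"
    using word_class_concat_assoc[OF W(1) V(1) U(1)]
    by (simp add: mult_topprod_word_class is_iword_concat)
next
  fix x
  assume "x \<in> carrier (topprod G)"
  then obtain W where W: "is_iword G W" "x = word_class G W"
    by (auto simp: carrier_topprod)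
  then show "\<one>\<^bsub>topprod G\<^esub> \<otimes>\<^bsub>topprod G\<^esub> x = x"
    using word_class_concat_empty[OF W(1)] by (simp add: one_topprod mult_topprod_word_class is_iword_empty)
  have "word_class G (inverse_word G W) \<in> carrier (topprod G)"
    using is_iword_inverse_word[OF grp W(1)] unfolding carrier_topprod by blast
  moreover have "word_class G (inverse_word G W) \<otimes>\<^bsub>topprod G\<^esub> x = \<one>\<^bsub>topprod G\<^esub>"
    using W inverse_word_concat_trivial(1)[OF W(1)]
    by (simp add: one_topprod mult_topprod_word_class is_iword_inverse_word[OF grp])
  ultimately show "\<exists>y \<in> carrier (topprod G). y \<otimes>\<^bsub>topprod G\<^esub> x = \<one>\<^bsub>topprod G\<^esub>" ..
qed

lemma inv_topprod_word_class:
  assumes "is_iword G W"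
  shows "inv\<^bsub>topprod G\<^esub> word_class G W = word_class G (inverse_word G W)"
proof (rule group.inv_equality[OF topprod_group])
  have W': "is_iword G (inverse_word G W)"
    using is_iword_inverse_word[OF grp assms] .
  then show "word_class G (inverse_word G W) \<otimes>\<^bsub>topprod G\<^esub> word_class G W = \<one>\<^bsub>topprod G\<^esub>"
    using inverse_word_concat_trivial(1)[OF assms]
    by (simp add: one_topprod mult_topprod_word_class[OF W' assms])
  show "word_class G W \<in> carrier (topprod G)" "word_class G (inverse_word G W) \<in> carrier (topprod G)"
    using assms W' unfolding carrier_topprod by blast+
qed

lemma pow_topprod_word_class:
  assumes "is_iword G W"
  shows "\<exists>V. is_iword G V \<and> word_class G W [^]\<^bsub>topprod G\<^esub> k = word_class G V
    \<and> (\<forall>m. fp_eq G (proj m V) (word_pow k (proj m W)))"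
proof (induction k)
  case 0
  show ?case
    using is_iword_empty by (intro exI[of _ empty_word]) (simp add: one_topprod)
next
  case (Suc k)
  then obtain V where V: "is_iword G V" "word_class G W [^]\<^bsub>topprod G\<^esub> k = word_class G V"
    "\<forall>m. fp_eq G (proj m V) (word_pow k (proj m W))"
    by blast
  have "fp_eq G (proj m (concat_word V W)) (word_pow (Suc k) (proj m W))" for m
    using fp_eq_append_right[OF spec[OF V(3), of m], of "proj m W"]
    by (simp add: proj_concat_word[OF V(1) assms] word_pow_Suc')
  then show ?case
    using V assms is_iword_concat[OF V(1) assms] mult_topprod_word_class[OF V(1) assms]
    by (intro exI[of _ "concat_word V W"]) simp
qed

lemma torsion_proj:
  assumes W: "is_iword G W"
    and pow: "word_class G W [^]\<^bsub>topprod G\<^esub> k = \<one>\<^bsub>topprod G\<^esub>"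
  shows "fp_eq G (word_pow k (proj m W)) []"
proof -
  obtain V where V: "is_iword G V" "word_class G W [^]\<^bsub>topprod G\<^esub> k = word_class G V"
    "\<forall>m. fp_eq G (proj m V) (word_pow k (proj m W))"
    using pow_topprod_word_class[OF W] by blast
  then have "word_class G V = word_class G empty_word"
    using pow by (simp add: one_topprod)
  then have "fp_eq G (proj m V) []"
    using word_class_eq_iff[OF V(1) is_iword_empty] by simp
  then show ?thesis
    using fp_eq_iff_left[OF V(3)[rule_format, of m]] by blast
qed

lemma conj_topprod_word_class:
  assumes P: "is_iword G P" and W: "is_iword G W"
  shows "\<exists>C. is_iword G C \<and>
    word_class G (inverse_word G P) \<otimes>\<^bsub>topprod G\<^esub> word_class G W
      \<otimes>\<^bsub>topprod G\<^esub> inv\<^bsub>topprod G\<^esub> word_class G (inverse_word G P) = word_class G C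
    \<and> (\<forall>m. proj m C = conj_proj G m P W)"
proof -
  interpret topprod: group "topprod G"
    by (rule topprod_group)
  have P': "is_iword G (inverse_word G P)"
    using is_iword_inverse_word[OF grp P] .
  have "word_class G P \<in> carrier (topprod G)"
    using P unfolding carrier_topprod by blast
  then have "inv\<^bsub>topprod G\<^esub> word_class G (inverse_word G P) = word_class G P"
    using topprod.inv_inv by (simp flip: inv_topprod_word_class[OF P])
  then show ?thesis
    using P P' W
    by (intro exI[of _ "concat_word (concat_word (inverse_word G P) W) P"])
      (simp add: mult_topprod_word_class is_iword_concat proj_concat_word[OF is_iword_concat]
        proj_concat_word proj_inverse_word conj_proj_def)
qed

end

section \<open>Coherent choices along a filtration\<close>

text \<open>Koenig's lemma for the finitely branching tree of admissible sets.\<close>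

locale coherent_choices =
  fixes D :: "nat \<Rightarrow> 'b set" and admissible :: "nat \<Rightarrow> 'b set \<Rightarrow> bool"
  assumes finite_level: "finite (D m)"
    and level_mono: "D m \<subseteq> D (Suc m)"
    and admissible_subset: "admissible m X \<Longrightarrow> X \<subseteq> D m"
    and admissible_exists: "\<exists>X. admissible m X"
    and admissible_restrict: "admissible (Suc m) X \<Longrightarrow> admissible m (X \<inter> D m)"
begin

lemma level_mono_le: "m \<le> n \<Longrightarrow> D m \<subseteq> D n"
  using level_mono by (rule lift_Suc_mono_le)

lemma admissible_restrict_le: "m \<le> n \<Longrightarrow> admissible n X \<Longrightarrow> admissible m (X \<inter> D m)"
proof (induction n arbitrary: X rule: dec_induct)
  case base
  then show ?case using admissible_subset[of m X] by (simp add: Int_absorb2)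
next
  case (step n)
  then have "admissible m (X \<inter> D n \<inter> D m)"
    using admissible_restrict by blast
  moreover have "X \<inter> D n \<inter> D m = X \<inter> D m"
    using level_mono_le[OF step.hyps(1)] by blast
  ultimately show ?case by simp
qed

definition extendable :: "nat \<Rightarrow> 'b set \<Rightarrow> bool" where
  "extendable m Y \<longleftrightarrow> Y \<subseteq> D m \<and> (\<forall>n \<ge> m. \<exists>Z. admissible n Z \<and> Z \<inter> D m = Y)"

lemma extendable_trace_in:
  assumes "finite C" and "\<forall>n \<ge> m. \<exists>Z. admissible n Z \<and> Z \<inter> D m \<in> C"
  shows "\<exists>Y \<in> C. \<forall>n \<ge> m. \<exists>Z. admissible n Z \<and> Z \<inter> D m = Y"
proof (rule ccontr)
  assume "\<not> ?thesis"
  then obtain N where N: "\<And>Y. Y \<in> C \<Longrightarrow> N Y \<ge> m \<and> (\<forall>Z. admissible (N Y) Z \<longrightarrow> Z \<inter> D m \<noteq> Y)"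
    by metis
  define n where "n = Max (insert m (N ` C))"
  have n: "\<And>Y. Y \<in> C \<Longrightarrow> N Y \<le> n" "m \<le> n"
    unfolding n_def using assms(1) by auto
  obtain Z where Z: "admissible n Z" "Z \<inter> D m \<in> C"
    using assms(2) n(2) by blast
  let ?Y = "Z \<inter> D m"
  have "admissible (N ?Y) (Z \<inter> D (N ?Y))"
    using admissible_restrict_le[OF n(1)[OF Z(2)] Z(1)] .
  moreover have "Z \<inter> D (N ?Y) \<inter> D m = ?Y"
    using level_mono_le[of m "N ?Y"] N[OF Z(2)] by blast
  ultimately show False
    using N[OF Z(2)] by blast
qed

lemma extendable_0: "\<exists>Y. extendable 0 Y"
proof -
  have "\<forall>n \<ge> 0. \<exists>Z. admissible n Z \<and> Z \<inter> D 0 \<in> Pow (D 0)"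
    using admissible_exists by blast
  then show ?thesis
    using extendable_trace_in[of "Pow (D 0)" 0] finite_level[of 0]
    unfolding extendable_def by auto
qed

lemma extendable_Suc:
  assumes "extendable m Y"
  shows "\<exists>Y'. extendable (Suc m) Y' \<and> Y' \<inter> D m = Y"
proof -
  let ?C = "{Y' \<in> Pow (D (Suc m)). Y' \<inter> D m = Y}"
  have "\<forall>n \<ge> Suc m. \<exists>Z. admissible n Z \<and> Z \<inter> D (Suc m) \<in> ?C"
  proof (intro allI impI)
    fix n assume "Suc m \<le> n"
    then obtain Z where "admissible n Z" "Z \<inter> D m = Y"
      using assms unfolding extendable_def by (meson Suc_leD)
    moreover have "Z \<inter> D (Suc m) \<inter> D m = Z \<inter> D m"
      using level_mono[of m] by blast
    ultimately show "\<exists>Z. admissible n Z \<and> Z \<inter> D (Suc m) \<in> ?C" by blast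
  qed
  then show ?thesis
    using extendable_trace_in[of ?C "Suc m"] finite_level[of "Suc m"]
    unfolding extendable_def by auto
qed

lemma extendable_admissible: "extendable m Y \<Longrightarrow> admissible m Y"
  unfolding extendable_def using admissible_subset by (metis Int_absorb2 order_refl)

lemma Union_chain_restrict:
  assumes "\<And>m. f m \<subseteq> D m" "\<And>m. f (Suc m) \<inter> D m = f m"
  shows "(\<Union>n. f n) \<inter> D m = f m"
proof -
  have down: "f n \<inter> D k = f k" if "k \<le> n" for k n
    using that
  proof (induction n rule: dec_induct)
    case base
    then show ?case using assms(1)[of k] by blast
  next
    case (step n)
    then show ?case
      using assms(2)[of n] level_mono_le[OF step.hyps(1)] by blast
  qed
  show ?thesis
  proof
    show "(\<Union>n. f n) \<inter> D m \<subseteq> f m"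
    proof
      fix x assume "x \<in> (\<Union>n. f n) \<inter> D m"
      then obtain n where x: "x \<in> f n" "x \<in> D m" by blast
      show "x \<in> f m"
      proof (cases "m \<le> n")
        case False
        then show ?thesis
          using down[of n m] x by auto
      qed (use down x in blast)
    qed
  qed (use assms(1) in blast)
qed

theorem coherent_choice: "\<exists>I. \<forall>m. admissible m (I \<inter> D m)"
proof -
  obtain Y0 where Y0: "extendable 0 Y0"
    using extendable_0 by blast
  obtain next_choice where next_choice:
    "\<And>m Y. extendable m Y \<Longrightarrow> extendable (Suc m) (next_choice m Y) \<and> next_choice m Y \<inter> D m = Y"
    using extendable_Suc by metis
  define f where "f = rec_nat Y0 next_choice"
  have f_Suc: "f (Suc m) = next_choice m (f m)" for m
    by (simp add: f_def)
  have f: "extendable m (f m)" for m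
    by (induction m) (use Y0 next_choice in \<open>simp_all add: f_def\<close>)
  have "(\<Union>n. f n) \<inter> D m = f m" for m
    using f next_choice unfolding f_Suc
    by (intro Union_chain_restrict) (auto simp: extendable_def f_Suc)
  then show ?thesis
    using extendable_admissible[OF f] by metis
qed

end

section \<open>Conjugating elements of finite order into a factor\<close>

lemma reduces_to_short_filter_index:
  assumes "reduces_to_short G xs"
  shows "reduces_to_short G (filter (\<lambda>l. P (fst l)) xs)"
proof -
  consider "fp_eq G xs []" | i a where "a \<in> carrier (G i)" "a \<noteq> \<one>\<^bsub>G i\<^esub>" "fp_eq G xs [(i, a)]"
    using assms unfolding reduces_to_short_def by blast
  then show ?thesis
  proof cases
    case 1
    then show ?thesis
      using fp_eq_filter_index[of G xs "[]" P] by (simp add: reduces_to_short_def)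
  next
    case (2 i a)
    then show ?thesis
      using fp_eq_filter_index[of G xs "[(i, a)]" P] by (cases "P i") (auto simp: reduces_to_short_def)
  qed
qed

text \<open>Choosing, level by level, a prefix that conjugates the finite projection of W into a
  factor, and making these choices coherent by Koenig's lemma, yields a single set of
  positions of W, i.e. a subword, that conjugates every projection into a factor.\<close>

lemma conjugating_subword:
  assumes grp: "\<And>n. group (G n)" and W: "is_iword G W" and "k > 0"
    and torsion: "\<And>m. fp_eq G (word_pow k (proj m W)) []"
  shows "\<exists>I \<subseteq> fst W. \<forall>m. reduces_to_short G (conj_proj G m (I, snd W) W)"
proof -
  define D where "D m = {q \<in> fst W. fst (snd W q) \<le> m}" for m
  define admissible where
    "admissible m X \<longleftrightarrow> X \<subseteq> D m \<and> reduces_to_short G (conj_proj G m (X, snd W) W)" for m X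
  interpret coherent_choices D admissible
  proof
    show "finite (D m)" for m
      unfolding D_def by (rule finite_iword_levels_le[OF W])
    show "D m \<subseteq> D (Suc m)" for m
      unfolding D_def by auto
    show "admissible m X \<Longrightarrow> X \<subseteq> D m" for m X
      unfolding admissible_def by simp
  next
    fix m
    obtain j where "reduces_to_short G (word_inv G (take j (proj m W)) @ proj m W @ take j (proj m W))"
      using torsion_conjugate_prefix[OF grp valid_word_proj[OF W] \<open>k > 0\<close> torsion] by blast
    moreover obtain X where "X \<subseteq> D m" "proj m (X, snd W) = take j (proj m W)"
      using take_proj_eq_proj_restrict[OF W, of m j] unfolding D_def by blast
    ultimately show "\<exists>X. admissible m X"
      unfolding admissible_def conj_proj_def by auto
  next
    fix m X
    assume "admissible (Suc m) X"
    then have X: "X \<subseteq> D (Suc m)" and short: "reduces_to_short G (conj_proj G (Suc m) (X, snd W) W)"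
      unfolding admissible_def by auto
    have "proj m (X \<inter> D m, snd W) = proj m (X, snd W)"
      using X unfolding D_def by (intro proj_cong_levels) auto
    moreover have "is_iword G (X, snd W)"
      using X is_iword_restrict[OF W] unfolding D_def by blast
    ultimately have "conj_proj G m (X \<inter> D m, snd W) W
        = filter (\<lambda>l. fst l \<le> m) (conj_proj G (Suc m) (X, snd W) W)"
      using conj_proj_le_filter[of G "(X, snd W)" W m "Suc m"] W by (simp only: conj_proj_def)
    then show "admissible m (X \<inter> D m)"
      unfolding admissible_def using reduces_to_short_filter_index[OF short] by simp
  qed
  obtain I where I: "\<forall>m. admissible m (I \<inter> D m)"
    using coherent_choice by blast
  have "proj m (I \<inter> D m, snd W) = proj m (I \<inter> fst W, snd W)" for m
    unfolding D_def by (intro proj_cong_levels) auto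
  then show ?thesis
    using I unfolding admissible_def conj_proj_def by (intro exI[of _ "I \<inter> fst W"]) auto
qed

text \<open>The first level m0 at which the projections become nontrivial determines the letter:
  every later projection is a single letter whose restriction to level m0 is nontrivial.\<close>

lemma short_projections_letter:
  assumes C: "is_iword G C" and short: "\<And>m. reduces_to_short G (proj m C)"
    and nontrivial: "\<exists>m. \<not> fp_eq G (proj m C) []"
  shows "\<exists>i. \<exists>a \<in> carrier (G i). a \<noteq> \<one>\<^bsub>G i\<^esub> \<and>
    (\<forall>m. fp_eq G (proj m C) (proj m (letter_iword i a)))"
proof -
  define m0 where "m0 = (LEAST m. \<not> fp_eq G (proj m C) [])"
  have m0: "\<not> fp_eq G (proj m0 C) []"
    unfolding m0_def using nontrivial LeastI_ex[of "\<lambda>m. \<not> fp_eq G (proj m C) []"] by blast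
  then obtain i a where a: "a \<in> carrier (G i)" "a \<noteq> \<one>\<^bsub>G i\<^esub>" "fp_eq G (proj m0 C) [(i, a)]"
    using short[of m0] unfolding reduces_to_short_def by blast
  have "fp_eq G (proj m C) (filter (\<lambda>l. fst l \<le> m) [(i, a)])" for m
  proof (cases "m0 \<le> m")
    case True
    then obtain i' a' where a': "fp_eq G (proj m C) [(i', a')]"
      using short[of m] fp_eq_proj_le[OF C True, of "[]"] m0 unfolding reduces_to_short_def by auto
    then have "i' \<le> m0" "fp_eq G (proj m0 C) [(i', a')]"
      using fp_eq_proj_le[OF C True a'] m0 by (auto split: if_splits)
    then have "fp_eq G (proj m C) [(i, a)]"
      using fp_eq_trans[OF a' fp_eq_trans[OF fp_eq_sym a(3)]] by blast
    moreover have "i \<le> m0"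
      using fp_eq_proj_le[OF C order_refl a(3)] m0 by (auto split: if_splits)
    ultimately show ?thesis
      using True by simp
  next
    case False
    then show ?thesis
      using fp_eq_proj_le[OF C _ a(3), of m] by simp
  qed
  then show ?thesis
    using a unfolding proj_letter_iword by blast
qed

lemma word_class_short_projections:
  assumes grp: "\<And>n. group (G n)" and C: "is_iword G C"
    and short: "\<And>m. reduces_to_short G (proj m C)"
  shows "\<exists>i. \<exists>a \<in> carrier (G i). word_class G C = factor_incl G i a"
proof (cases "\<forall>m. fp_eq G (proj m C) []")
  case True
  then have "word_class G C = factor_incl G 0 \<one>\<^bsub>G 0\<^esub>"
    by (simp add: factor_incl_def one_topprod word_class_eq_iff[OF C is_iword_empty])
  then show ?thesis
    using monoid.one_closed[OF group.is_monoid[OF grp]] by blast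
next
  case False
  then obtain i a where a: "a \<in> carrier (G i)" "a \<noteq> \<one>\<^bsub>G i\<^esub>"
    and "\<forall>m. fp_eq G (proj m C) (proj m (letter_iword i a))"
    using short_projections_letter[OF C short] by blast
  then have "word_class G C = word_class G (letter_iword i a)"
    by (simp add: word_class_eq_iff[OF C is_iword_letter_iword] is_letter_def)
  then show ?thesis
    using a by (auto simp: factor_incl_def letter_iword_def)
qed

theorem lemma22:
  fixes G :: "nat \<Rightarrow> 'a monoid"
  assumes grp: "\<And>n. group (G n)"
    and g: "g \<in> carrier (topprod G)"
    and fin: "\<exists>k::nat. k > 0 \<and> g [^]\<^bsub>topprod G\<^esub> k = \<one>\<^bsub>topprod G\<^esub>"
  shows "\<exists>h \<in> carrier (topprod G). \<exists>i. \<exists>a \<in> carrier (G i).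
           h \<otimes>\<^bsub>topprod G\<^esub> g \<otimes>\<^bsub>topprod G\<^esub> inv\<^bsub>topprod G\<^esub> h = factor_incl G i a"
proof -
  obtain W where W: "is_iword G W" and gW: "g = word_class G W"
    using g by (auto simp: carrier_topprod)
  obtain k :: nat where "k > 0" and "g [^]\<^bsub>topprod G\<^esub> k = \<one>\<^bsub>topprod G\<^esub>"
    using fin by blast
  then obtain I where "I \<subseteq> fst W" and short: "\<And>m. reduces_to_short G (conj_proj G m (I, snd W) W)"
    using conjugating_subword[OF grp W \<open>k > 0\<close> torsion_proj[OF grp W]] gW by auto
  then have P: "is_iword G (I, snd W)"
    using is_iword_restrict[OF W] by blast
  let ?h = "word_class G (inverse_word G (I, snd W))"
  obtain C where C: "is_iword G C"
    and conj: "?h \<otimes>\<^bsub>topprod G\<^esub> g \<otimes>\<^bsub>topprod G\<^esub> inv\<^bsub>topprod G\<^esub> ?h = word_class G C"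
    and proj_C: "\<forall>m. proj m C = conj_proj G m (I, snd W) W"
    using conj_topprod_word_class[OF grp P W] gW by blast
  obtain i a where "a \<in> carrier (G i)" "word_class G C = factor_incl G i a"
    using word_class_short_projections[OF grp C] short proj_C by auto
  moreover have "?h \<in> carrier (topprod G)"
    using is_iword_inverse_word[OF grp P] unfolding carrier_topprod by blast
  ultimately show ?thesis
    using conj by blast
qed

end
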